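(* Let $W$ be a finite reflection group acting linearly on a Euclidean vector space $\mathbb{E}$, and let $Z\subseteq\mathbb{E}$ be a $W$-invariant convex polytope. For $v\in\mathbb{E}$ let $n=v-\mathrm{pr}_Z(v)$. Then every (closed) $W$-chamber that contains $v$ also contains $n$.
   Context: $\mathrm{pr}_Z$ is the nearest-point projection onto $Z$. The $W$-chambers are the closed simplicial cones cut out by the reflection hyperplanes of $W$. *)

theory Defs
  imports "HOL-Analysis.Analysis"
begin

definition reflection :: "'a::euclidean_space \<Rightarrow> 'a \<Rightarrow> 'a" where
  "reflection a = (\<lambda>x. x - (2 * (x \<bullet> a) / (a \<bullet> a)) *\<^sub>R a)"

text \<open>The group (under composition) generated by a set R of reflections.
  Since reflections are involutions, this is closed under inverses whenever finite.\<close>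
inductive_set generated_by :: "('a \<Rightarrow> 'a) set \<Rightarrow> ('a \<Rightarrow> 'a) set" for R where
  gen_id: "id \<in> generated_by R"
| gen_step: "r \<in> R \<Longrightarrow> g \<in> generated_by R \<Longrightarrow> r \<circ> g \<in> generated_by R"

definition finite_reflection_group :: "('a::euclidean_space \<Rightarrow> 'a) set \<Rightarrow> bool" where
  "finite_reflection_group W \<longleftrightarrow> finite W \<and>
     (\<exists>R. (\<forall>r\<in>R. \<exists>a. a \<noteq> 0 \<and> r = reflection a) \<and> W = generated_by R)"

definition reflection_hyperplanes :: "('a::euclidean_space \<Rightarrow> 'a) set \<Rightarrow> 'a set set" where
  "reflection_hyperplanes W = {{x. x \<bullet> a = 0} | a. a \<noteq> 0 \<and> reflection a \<in> W}"

definition chambers :: "('a::euclidean_space \<Rightarrow> 'a) set \<Rightarrow> 'a set set" where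
  "chambers W = closure ` components (UNIV - \<Union>(reflection_hyperplanes W))"

end

theory Submission
  imports Defs
begin

(* Call a \<noteq> 0 a root of W if the reflection s_a lies in W.  Fix a point k in
   the open chamber whose closure is C.  Connectedness and convexity show that the open
   chamber is exactly the open cone {y. (y\<bullet>a)(k\<bullet>a) > 0 for every root a}, so its closure C
   is the closed cone {y. (y\<bullet>a)(k\<bullet>a) \<ge> 0 for every root a}; no finiteness is needed here.
   Membership of n = v - pr_Z v in C is therefore a statement about one root at a time.
   For a root a, the point p = pr_Z v has its mirror image s_a p in Z.  The variational
   inequality of the nearest-point projection then gives (p\<bullet>a)(n\<bullet>a) \<ge> 0: p and n never lie
   strictly on opposite sides of a-perp.  Since v\<bullet>a = p\<bullet>a + n\<bullet>a and v lies on the same side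
   as k, a short sign argument puts n on that side as well. *)

definition roots :: "('a::euclidean_space \<Rightarrow> 'a) set \<Rightarrow> 'a set" where
  "roots W = {a. a \<noteq> 0 \<and> reflection a \<in> W}"

lemma mem_hyperplane_complement_iff:
  "z \<in> UNIV - \<Union>(reflection_hyperplanes W) \<longleftrightarrow> (\<forall>a\<in>roots W. z \<bullet> a \<noteq> 0)"
  unfolding reflection_hyperplanes_def roots_def by auto

text \<open>Inside one component of the hyperplane complement, every root has constant sign,
  since a connected set meeting both sides of a hyperplane meets the hyperplane.\<close>
lemma component_same_side:
  assumes K: "K \<in> components (UNIV - \<Union>(reflection_hyperplanes W))"
    and "x \<in> K" "k \<in> K" "a \<in> roots W"
  shows "0 < (x \<bullet> a) * (k \<bullet> a)"
proof (rule ccontr)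
  assume "\<not> ?thesis"
  hence "x \<bullet> a \<le> 0 \<and> 0 \<le> k \<bullet> a \<or> k \<bullet> a \<le> 0 \<and> 0 \<le> x \<bullet> a"
    by (smt (verit) mult_neg_neg mult_pos_pos)
  then obtain z where "z \<in> K" "a \<bullet> z = 0"
    using connected_ivt_hyperplane[OF in_components_connected[OF K] \<open>x \<in> K\<close> \<open>k \<in> K\<close>, of a 0]
      connected_ivt_hyperplane[OF in_components_connected[OF K] \<open>k \<in> K\<close> \<open>x \<in> K\<close>, of a 0]
    by (auto simp: inner_commute)
  hence "z \<in> UNIV - \<Union>(reflection_hyperplanes W)" "z \<bullet> a = 0"
    using in_components_subset[OF K] by (auto simp: inner_commute)
  with \<open>a \<in> roots W\<close> show False by (simp only: mem_hyperplane_complement_iff)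
qed

lemma convex_sign_cone: "convex {y. \<forall>a\<in>A. 0 < (y \<bullet> a) * (k \<bullet> a)}"
proof -
  have cone: "{y. \<forall>a\<in>A. 0 < (y \<bullet> a) * (k \<bullet> a)} = (\<Inter>a\<in>A. {y. 0 < ((k \<bullet> a) *\<^sub>R a) \<bullet> y})"
    by (auto simp: inner_commute mult.commute)
  show ?thesis unfolding cone by (intro convex_INT ballI convex_halfspace_gt)
qed

lemma component_eq_sign_cone:
  assumes K: "K \<in> components (UNIV - \<Union>(reflection_hyperplanes W))" and "k \<in> K"
  shows "K = {y. \<forall>a\<in>roots W. 0 < (y \<bullet> a) * (k \<bullet> a)}"
    (is "K = ?cone")
proof
  show "K \<subseteq> ?cone" using component_same_side[OF K _ \<open>k \<in> K\<close>] by blast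
next
  have "k \<in> ?cone" using component_same_side[OF K \<open>k \<in> K\<close> \<open>k \<in> K\<close>] by blast
  moreover have "?cone \<subseteq> UNIV - \<Union>(reflection_hyperplanes W)"
  proof
    fix y assume "y \<in> ?cone"
    hence "\<forall>a\<in>roots W. y \<bullet> a \<noteq> 0" by fastforce
    thus "y \<in> UNIV - \<Union>(reflection_hyperplanes W)" by (simp only: mem_hyperplane_complement_iff)
  qed
  ultimately show "?cone \<subseteq> K"
    using components_maximal[OF K convex_connected[OF convex_sign_cone]] \<open>k \<in> K\<close> by blast
qed

text \<open>The closure of the open sign cone is the closed sign cone, provided k itself lies
  off all the hyperplanes: a point y of the closed cone is the limit of y + t k, t \<rightarrow> 0+.\<close>
lemma closure_sign_cone:
  fixes k :: "'a::euclidean_space"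
  assumes k: "\<forall>a\<in>A. k \<bullet> a \<noteq> 0"
  shows "closure {y. \<forall>a\<in>A. 0 < (y \<bullet> a) * (k \<bullet> a)} = {y. \<forall>a\<in>A. 0 \<le> (y \<bullet> a) * (k \<bullet> a)}"
    (is "closure ?open = ?closed")
proof
  have cone: "?closed = (\<Inter>a\<in>A. {y. 0 \<le> ((k \<bullet> a) *\<^sub>R a) \<bullet> y})"
    by (auto simp: inner_commute mult.commute)
  have "closed ?closed" unfolding cone by (intro closed_INT ballI closed_halfspace_ge)
  moreover have "?open \<subseteq> ?closed" by (auto simp: less_imp_le)
  ultimately show "closure ?open \<subseteq> ?closed" by (simp add: closure_minimal)
next
  show "?closed \<subseteq> closure ?open"
  proof
    fix y assume y: "y \<in> ?closed"
    have shifted: "y + t *\<^sub>R k \<in> ?open" if "t > 0" for t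
    proof (intro CollectI ballI)
      fix a assume "a \<in> A"
      have "0 < t * ((k \<bullet> a) * (k \<bullet> a))"
        using k \<open>a \<in> A\<close> \<open>t > 0\<close> not_real_square_gt_zero by (blast intro: mult_pos_pos)
      moreover have "0 \<le> (y \<bullet> a) * (k \<bullet> a)" using y \<open>a \<in> A\<close> by blast
      ultimately show "0 < ((y + t *\<^sub>R k) \<bullet> a) * (k \<bullet> a)"
        by (simp add: inner_add_left distrib_right mult.assoc)
    qed
    have "(\<lambda>m. y + inverse (real (Suc m)) *\<^sub>R k) \<longlonglongrightarrow> y + 0 *\<^sub>R k"
      by (intro tendsto_intros LIMSEQ_inverse_real_of_nat)
    thus "y \<in> closure ?open"
      unfolding closure_sequential using shifted
      by (intro exI[of _ "\<lambda>m. y + inverse (real (Suc m)) *\<^sub>R k"]) auto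
  qed
qed

lemma chamber_eq_sign_cone:
  assumes "C \<in> chambers W"
  obtains k where "\<forall>a\<in>roots W. k \<bullet> a \<noteq> 0"
    and "C = {y. \<forall>a\<in>roots W. 0 \<le> (y \<bullet> a) * (k \<bullet> a)}"
proof -
  obtain K where K: "K \<in> components (UNIV - \<Union>(reflection_hyperplanes W))"
    and C: "C = closure K"
    using assms unfolding chambers_def by blast
  obtain k where "k \<in> K" using in_components_nonempty[OF K] by blast
  hence "k \<in> UNIV - \<Union>(reflection_hyperplanes W)" using in_components_subset[OF K] by blast
  hence k: "\<forall>a\<in>roots W. k \<bullet> a \<noteq> 0" by (simp only: mem_hyperplane_complement_iff)
  show thesis
    using that[OF k] closure_sign_cone[OF k] component_eq_sign_cone[OF K \<open>k \<in> K\<close>] C by simp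
qed

text \<open>If a closed convex set is symmetric under the reflection s_a, then a point and its
  nearest point p in the set never lie strictly on opposite sides of a-perp relative to p:
  testing the variational inequality at s_a p gives (p\<bullet>a)((v - p)\<bullet>a) \<ge> 0.\<close>
lemma closest_point_reflection_sign:
  fixes Z :: "'a::euclidean_space set"
  assumes "convex Z" "closed Z" "Z \<noteq> {}" "a \<noteq> 0" "reflection a ` Z = Z"
  shows "0 \<le> (closest_point Z v \<bullet> a) * ((v - closest_point Z v) \<bullet> a)"
proof -
  define p where "p = closest_point Z v"
  have "p \<in> Z" using closest_point_in_set[OF assms(2,3)] p_def by simp
  hence "reflection a p \<in> Z" using assms(5) by blast
  hence "(v - p) \<bullet> (reflection a p - p) \<le> 0"
    using closest_point_dot[OF assms(1,2)] p_def by blast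
  hence "0 \<le> (2 * (p \<bullet> a) / (a \<bullet> a)) * ((v - p) \<bullet> a)"
    by (simp add: reflection_def inner_diff_right)
  moreover have "a \<bullet> a > 0" using assms(4) by simp
  ultimately have "0 \<le> (p \<bullet> a) * ((v - p) \<bullet> a) / (a \<bullet> a)"
    by (simp add: field_simps)
  with \<open>a \<bullet> a > 0\<close> show ?thesis unfolding p_def
    by (simp add: zero_le_divide_iff not_le[symmetric])
qed

lemma summand_sign:
  fixes P N T :: real
  assumes "0 \<le> (P + N) * T" "0 \<le> P * N" "T \<noteq> 0"
  shows "0 \<le> N * T"
proof (rule ccontr)
  assume "\<not> ?thesis"
  hence "N \<noteq> 0" "((P + N) * T) * (N * T) \<le> 0"
    using assms(1) by (auto simp: mult_nonneg_nonpos)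
  moreover have "((P + N) * T) * (N * T) = (P * N + N * N) * (T * T)"
    by (simp add: algebra_simps)
  moreover have "0 < P * N + N * N" "0 < T * T"
    using \<open>N \<noteq> 0\<close> assms(2,3) not_real_square_gt_zero by (blast intro: add_nonneg_pos)+
  ultimately show False by (metis mult_pos_pos not_le)
qed

theorem mainTheorem18:
  fixes W :: "('a::euclidean_space \<Rightarrow> 'a) set" and Z :: "'a set" and v :: 'a
  assumes "finite_reflection_group W"
    and "polytope Z" and "Z \<noteq> {}"
    and "\<forall>w\<in>W. w ` Z = Z"
    and "C \<in> chambers W" and "v \<in> C"
  shows "v - closest_point Z v \<in> C"
proof -
  obtain k where k: "\<forall>a\<in>roots W. k \<bullet> a \<noteq> 0"
    and C: "C = {y. \<forall>a\<in>roots W. 0 \<le> (y \<bullet> a) * (k \<bullet> a)}"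
    using chamber_eq_sign_cone[OF assms(5)] by blast
  define p where "p = closest_point Z v"
  have "0 \<le> ((v - p) \<bullet> a) * (k \<bullet> a)" if a: "a \<in> roots W" for a
  proof (rule summand_sign)
    have "a \<noteq> 0" "reflection a ` Z = Z" using a assms(4) by (auto simp: roots_def)
    thus "0 \<le> (p \<bullet> a) * ((v - p) \<bullet> a)"
      using closest_point_reflection_sign assms(2,3) polytope_imp_convex polytope_imp_closed
      unfolding p_def by blast
    show "0 \<le> (p \<bullet> a + (v - p) \<bullet> a) * (k \<bullet> a)"
      using assms(6) a unfolding C by (simp add: inner_diff_left)
    show "k \<bullet> a \<noteq> 0" using k a by blast
  qed
  thus ?thesis unfolding C p_def by blast
qed

end
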